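(* Let $R$ be the ring of integers of a nonarchimedean local field of characteristic not $2$ in which $2$ is a prime element. (a) If an $R$-lattice $J$ is isotropic, then $\mathbb{H}\perp J$ primitively represents all binary lattices of the form $2^a\mathbb{H}$ for every integer $a\ge0$. (b) If an $R$-lattice $J$ primitively represents $2^{a+1}\epsilon$ for an integer $a\ge0$ and a unit $\epsilon\in R$, then $\mathbb{H}\perp J$ primitively represents the binary lattices $2^a\mathbb{H}$ and $2^a\mathbb{A}$. In particular, $\mathbb{H}^2$ primitively represents $2^a\mathbb{H}$ and $2^a\mathbb{A}$ for every integer $a\ge 0$. Hence, for every $n\ge1$, $\mathbb{H}^n$ primitively represents all even $R$-lattices of rank $n$.
   Context: An $R$-lattice is a finitely generated $R$-submodule of a quadratic space $(V,B)$ over $F$ with $Q(v)=B(v,v)$, assumed integral ($B(L,L)\subseteq R$) and nondegenerate; it is even if $Q(L)\subseteq 2R$, and isotropic if $Q(v)=0$ for some nonzero $v\in L$. $L$ primitively represents $\alpha\in R$ if $\alpha=Q(v)$ for a primitive vector $v$ (one with $Rv$ a direct summand). A representation is an $R$-linear map preserving $B$, primitive if its image is a direct summand. Fix $\rho\in R^\times$ such that $\Delta=1-4\rho$ is a nonsquare unit. For $\alpha\in R$, $\alpha\mathbb{H}$ and $\alpha\mathbb{A}$ are the binary lattices with Gram matrices $\begin{pmatrix}0&\alpha\\\alpha&0\end{pmatrix}$ and $\begin{pmatrix}2\alpha&\alpha\\\alpha&2\rho\alpha\end{pmatrix}$; $\mathbb{H}=1\mathbb{H}$, $\mathbb{A}=1\mathbb{A}$,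 and $\mathbb{H}^n$ is the orthogonal sum of $n$ copies of $\mathbb{H}$. *)

theory Defs
  imports "Jordan_Normal_Form.Determinant"
begin

text \<open>The base ring R: ring of integers of a nonarchimedean local field of characteristic
  not 2 in which 2 is a prime element. Characterised intrinsically: a domain in which 2 is a
  nonzero nonunit and every nonzero element is a unit times a power of 2 (a DVR with
  uniformizer 2), with finite residue field R/2R, complete for the 2-adic topology.\<close>
definition dyadic_local_int_ring :: "'a::idom itself \<Rightarrow> bool" where
  "dyadic_local_int_ring _ \<longleftrightarrow>
     (2::'a) \<noteq> 0 \<and> \<not> (2::'a) dvd 1 \<and>
     (\<forall>x::'a. x \<noteq> 0 \<longrightarrow> (\<exists>u k. u dvd 1 \<and> x = u * 2 ^ k)) \<and>
     (\<exists>S::'a set. finite S \<and> (\<forall>x. \<exists>s\<in>S. 2 dvd (x - s))) \<and>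
     (\<forall>f::nat \<Rightarrow> 'a. (\<forall>n. 2 ^ n dvd (f (Suc n) - f n)) \<longrightarrow>
        (\<exists>x. \<forall>n. 2 ^ n dvd (x - f n)))"

text \<open>An R-lattice of rank n, given by its Gram matrix w.r.t. a basis (R is a PID, so
  lattices are free): symmetric, integral (entries in R), nondegenerate.\<close>
definition lattice :: "nat \<Rightarrow> 'a::comm_ring_1 mat \<Rightarrow> bool" where
  "lattice n G \<longleftrightarrow> G \<in> carrier_mat n n \<and> transpose_mat G = G \<and> det G \<noteq> 0"

definition Qf :: "'a::comm_ring_1 mat \<Rightarrow> 'a vec \<Rightarrow> 'a" where
  "Qf G v = v \<bullet> (G *\<^sub>v v)"

definition even_lattice :: "nat \<Rightarrow> 'a::comm_ring_1 mat \<Rightarrow> bool" where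
  "even_lattice n G \<longleftrightarrow> lattice n G \<and> (\<forall>v\<in>carrier_vec n. (2::'a) dvd Qf G v)"

definition isotropic :: "nat \<Rightarrow> 'a::comm_ring_1 mat \<Rightarrow> bool" where
  "isotropic n G \<longleftrightarrow> (\<exists>v\<in>carrier_vec n. v \<noteq> 0\<^sub>v n \<and> Qf G v = 0)"

definition submod :: "nat \<Rightarrow> 'a::comm_ring_1 vec set \<Rightarrow> bool" where
  "submod n S \<longleftrightarrow> S \<subseteq> carrier_vec n \<and> 0\<^sub>v n \<in> S \<and>
     (\<forall>x\<in>S. \<forall>y\<in>S. x + y \<in> S) \<and> (\<forall>c. \<forall>x\<in>S. c \<cdot>\<^sub>v x \<in> S)"

definition direct_summand :: "nat \<Rightarrow> 'a::comm_ring_1 vec set \<Rightarrow> bool" where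
  "direct_summand n S \<longleftrightarrow> submod n S \<and>
     (\<exists>W. submod n W \<and> S \<inter> W = {0\<^sub>v n} \<and>
          (\<forall>x\<in>carrier_vec n. \<exists>s\<in>S. \<exists>w\<in>W. x = s + w))"

definition primitive_vec :: "nat \<Rightarrow> 'a::comm_ring_1 vec \<Rightarrow> bool" where
  "primitive_vec n v \<longleftrightarrow> v \<in> carrier_vec n \<and> v \<noteq> 0\<^sub>v n \<and>
     direct_summand n {c \<cdot>\<^sub>v v | c. True}"

definition prim_represents_elem :: "nat \<Rightarrow> 'a::comm_ring_1 mat \<Rightarrow> 'a \<Rightarrow> bool" where
  "prim_represents_elem n G \<alpha> \<longleftrightarrow> (\<exists>v. primitive_vec n v \<and> Qf G v = \<alpha>)"

text \<open>A representation of the rank-m lattice with Gram matrix A by the rank-n lattice with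
  Gram matrix G is an R-linear map R^m \<rightarrow> R^n (an n\<times>m matrix X) preserving B; it is
  primitive if its image is a direct summand.\<close>
definition represents_by :: "nat \<Rightarrow> 'a::comm_ring_1 mat \<Rightarrow> nat \<Rightarrow> 'a mat \<Rightarrow> 'a mat \<Rightarrow> bool" where
  "represents_by n G m A X \<longleftrightarrow> X \<in> carrier_mat n m \<and> transpose_mat X * G * X = A"

definition prim_represents :: "nat \<Rightarrow> 'a::comm_ring_1 mat \<Rightarrow> nat \<Rightarrow> 'a mat \<Rightarrow> bool" where
  "prim_represents n G m A \<longleftrightarrow>
     (\<exists>X. represents_by n G m A X \<and> direct_summand n {X *\<^sub>v u | u. u \<in> carrier_vec m})"

definition orth_sum :: "'a::zero mat \<Rightarrow> 'a mat \<Rightarrow> 'a mat" where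
  "orth_sum A B = four_block_mat A (0\<^sub>m (dim_row A) (dim_col B)) (0\<^sub>m (dim_row B) (dim_col A)) B"

definition hypH :: "'a::comm_ring_1 \<Rightarrow> 'a mat" where
  "hypH \<alpha> = mat 2 2 (\<lambda>(i,j). if i = j then 0 else \<alpha>)"

definition anisoA :: "'a::comm_ring_1 \<Rightarrow> 'a \<Rightarrow> 'a mat" where
  "anisoA \<rho> \<alpha> = mat 2 2 (\<lambda>(i,j). if i = 0 \<and> j = 0 then 2 * \<alpha>
                                else if i = 1 \<and> j = 1 then 2 * \<rho> * \<alpha> else \<alpha>)"

fun hypH_pow :: "nat \<Rightarrow> 'a::comm_ring_1 mat" where
  "hypH_pow 0 = 0\<^sub>m 0 0"
| "hypH_pow (Suc n) = orth_sum (hypH 1) (hypH_pow n)"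

end

(*
  Write H = R e + R f with B(e, f) = 1.  If J contains v with Q(v) = 2 \<alpha> c and a linear form
  p with p(v) = 1, then e and -c e + \<alpha> f + v span a primitive copy of \<alpha> H inside H \<perp> J.
  Taking c = 0 handles isotropic J, since dividing an isotropic vector by the right power of the
  uniformizer 2 makes it primitive.  For \<alpha> A take e + \<alpha> (1 - \<epsilon>) f + v and r e + \<alpha> q f + t v
  with q = 1 - (1 - \<epsilon>) r - 2 \<epsilon> t: their Gram matrix is that of \<alpha> A when \<rho> = r q + \<epsilon> t^2,
  and they span a direct summand when t - r is a unit.  Such t (a square root of \<rho> / \<epsilon>
  modulo 2) and r (a root of a quadratic with unit linear coefficient, by Hensel's lemma) exist
  because the residue field is finite and R is complete.  Part (c) is part (b) for J = H and
  v = (1, \<alpha>), and part (d) follows by writing an even L as U + U^T with U upper triangular.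
*)

theory Submission
  imports Defs
begin

section \<open>The dyadic ring\<close>

lemma
  assumes "dyadic_local_int_ring TYPE('a::idom)"
  shows dyadic_two_nonzero: "(2::'a) \<noteq> 0"
    and dyadic_two_not_unit: "\<not> (2::'a) dvd 1"
    and dyadic_unit_times_two_power: "x \<noteq> 0 \<Longrightarrow> \<exists>u k. u dvd 1 \<and> x = u * (2::'a) ^ k"
    and dyadic_finite_residues: "\<exists>S::'a set. finite S \<and> (\<forall>x. \<exists>s\<in>S. 2 dvd (x - s))"
    and dyadic_complete:
      "(\<And>n. (2::'a) ^ n dvd (f (Suc n) - f n)) \<Longrightarrow> \<exists>x. \<forall>n. 2 ^ n dvd (x - f n)"
  using assms unfolding dyadic_local_int_ring_def by blast+

lemma dyadic_unit_add_two_mult: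
  assumes R: "dyadic_local_int_ring TYPE('a::idom)" and u: "(u::'a) dvd 1"
  shows "(u + 2 * x) dvd 1"
proof -
  have u_not_even: "\<not> 2 dvd u"
    using u dyadic_two_not_unit[OF R] dvd_trans by blast
  have "u + 2 * x \<noteq> 0"
  proof
    assume "u + 2 * x = 0"
    then have "u = 2 * (- x)" by (simp add: add_eq_0_iff2)
    with u_not_even show False by simp
  qed
  then obtain v k where v: "v dvd 1" "u + 2 * x = v * 2 ^ k"
    using dyadic_unit_times_two_power[OF R] by blast
  show ?thesis
  proof (cases k)
    case 0
    with v show ?thesis by simp
  next
    case (Suc k')
    then have "u = 2 * (v * 2 ^ k' - x)"
      using v(2) by (simp add: eq_diff_eq[symmetric] right_diff_distrib ac_simps)
    with u_not_even show ?thesis by simp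
  qed
qed

lemma dyadic_two_dvd_square:
  assumes R: "dyadic_local_int_ring TYPE('a::idom)" and "(2::'a) dvd z ^ 2"
  shows "2 dvd z"
proof (cases "z = 0")
  case False
  then obtain v k where v: "v dvd 1" "z = v * 2 ^ k"
    using dyadic_unit_times_two_power[OF R] by blast
  show ?thesis
  proof (cases k)
    case 0
    then have "z ^ 2 dvd 1" using v by (simp add: power2_eq_square)
    then show ?thesis using assms(2) dyadic_two_not_unit[OF R] dvd_trans by blast
  qed (use v in simp)
qed simp

lemma dyadic_dvd_all_powers_eq_0:
  assumes R: "dyadic_local_int_ring TYPE('a::idom)" and "\<And>n. (2::'a) ^ n dvd x"
  shows "x = 0"
proof (rule ccontr)
  assume "x \<noteq> 0"
  then obtain v k where v: "v dvd 1" "x = v * 2 ^ k"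
    using dyadic_unit_times_two_power[OF R] by blast
  obtain c where "x = 2 ^ Suc k * c" using assms(2) by blast
  then have "2 ^ k * v = 2 ^ k * (2 * c)" using v by (simp add: ac_simps)
  then have "v = 2 * c" using dyadic_two_nonzero[OF R] by simp
  then show False using v(1) dyadic_two_not_unit[OF R] by (metis dvd_mult_left)
qed

text \<open>Squaring is injective on the finite residue field, hence surjective.\<close>
lemma dyadic_square_mod_two:
  assumes R: "dyadic_local_int_ring TYPE('a::idom)"
  shows "\<exists>y. (2::'a) dvd (x - y ^ 2)"
proof -
  define cls :: "'a \<Rightarrow> 'a set" where "cls z = {y. 2 dvd (y - z)}" for z
  have cls_eq: "cls a = cls b \<longleftrightarrow> 2 dvd (a - b)" for a b
  proof
    assume "cls a = cls b"
    moreover have "a \<in> cls a" by (simp add: cls_def)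
    ultimately show "2 dvd (a - b)" by (simp add: cls_def)
  next
    assume "2 dvd (a - b)"
    then have "2 dvd (y - a) \<longleftrightarrow> 2 dvd ((y - a) + (a - b))" for y
      by (simp only: dvd_add_left_iff)
    then have "2 dvd (y - a) \<longleftrightarrow> 2 dvd (y - b)" for y by simp
    then show "cls a = cls b" by (simp add: cls_def)
  qed
  have square_cong: "2 dvd (a - b) \<Longrightarrow> 2 dvd (a ^ 2 - b ^ 2)" for a b :: 'a
    by (simp add: power2_eq_square square_diff_square_factored)
  obtain S :: "'a set" where S: "finite S" "\<forall>x. \<exists>s\<in>S. 2 dvd (x - s)"
    using dyadic_finite_residues[OF R] by blast
  have "range cls \<subseteq> cls ` S"
  proof
    fix c assume "c \<in> range cls"
    then obtain z where "c = cls z" by blast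
    moreover obtain s where "s \<in> S" "2 dvd (z - s)" using S(2) by blast
    ultimately show "c \<in> cls ` S" by (simp add: cls_eq)
  qed
  then have fin: "finite (range cls)" using S(1) finite_subset by blast
  define sq where "sq c = cls ((SOME z. z \<in> c) ^ 2)" for c
  have sq_cls: "sq (cls a) = cls (a ^ 2)" for a
  proof -
    have "a \<in> cls a" unfolding cls_def by simp
    then have "(SOME z. z \<in> cls a) \<in> cls a" by (rule someI)
    then show ?thesis
      unfolding sq_def using cls_eq square_cong by (simp add: cls_def)
  qed
  have sub: "sq ` range cls \<subseteq> range cls" using sq_cls by auto
  have inj: "inj_on sq (range cls)"
  proof (rule inj_onI)
    fix c d assume "c \<in> range cls" "d \<in> range cls" "sq c = sq d"
    then obtain a b where ab: "c = cls a" "d = cls b" by blast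
    with \<open>sq c = sq d\<close> have "cls (a ^ 2) = cls (b ^ 2)" by (simp only: sq_cls)
    then have "2 dvd (a ^ 2 - b ^ 2)" by (simp only: cls_eq)
    have "(a - b) ^ 2 = (a ^ 2 - b ^ 2) - 2 * (b * (a - b))"
      by (simp add: power2_eq_square algebra_simps)
    with \<open>2 dvd (a ^ 2 - b ^ 2)\<close> have "2 dvd (a - b) ^ 2" by simp
    then show "c = d" using ab dyadic_two_dvd_square[OF R] by (simp add: cls_eq)
  qed
  have "cls x \<in> sq ` range cls"
    using endo_inj_surj[OF fin sub inj] by simp
  then obtain y where "cls x = cls (y ^ 2)" using sq_cls by auto
  then show ?thesis unfolding cls_eq by blast
qed

lemma dyadic_hensel_step:
  assumes R: "dyadic_local_int_ring TYPE('a::idom)"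
    and B: "(B::'a) dvd 1" and p: "2 ^ (n + 1) dvd (A * p ^ 2 + B * p + C)"
  shows "\<exists>p'. 2 ^ (n + 2) dvd (A * p' ^ 2 + B * p' + C) \<and> 2 ^ (n + 1) dvd (p' - p)"
proof -
  \<comment> \<open>Newton's correction; the derivative \<open>B + 2 A p\<close> is a unit.\<close>
  obtain m where m: "A * p ^ 2 + B * p + C = 2 ^ (n + 1) * m" using p by blast
  obtain w where w: "1 = (B + 2 * (A * p)) * w"
    using dyadic_unit_add_two_mult[OF R B] by blast
  define d where "d = - m * w"
  define p' where "p' = p + 2 ^ (n + 1) * d"
  have "A * p' ^ 2 + B * p' + C
      = 2 ^ (n + 1) * m + 2 ^ (n + 1) * (- m * ((B + 2 * (A * p)) * w)) + A * (2 ^ (n + 1) * d) ^ 2"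
    unfolding p'_def d_def m[symmetric] by (simp add: power2_eq_square algebra_simps)
  also have "\<dots> = 2 ^ (n + 2) * (A * 2 ^ n * d ^ 2)"
    unfolding w[symmetric] by (simp add: power2_eq_square power_add algebra_simps)
  finally have "2 ^ (n + 2) dvd (A * p' ^ 2 + B * p' + C)" by (rule dvdI)
  moreover have "2 ^ (n + 1) dvd (p' - p)" unfolding p'_def by simp
  ultimately show ?thesis by blast
qed

lemma dyadic_hensel_quadratic:
  assumes R: "dyadic_local_int_ring TYPE('a::idom)"
    and B: "(B::'a) dvd 1" and p0: "2 dvd (A * p0 ^ 2 + B * p0 + C)"
  shows "\<exists>x. A * x ^ 2 + B * x + C = 0 \<and> 2 dvd (x - p0)"
proof -
  define f where "f x = A * x ^ 2 + B * x + C" for x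
  have "\<exists>s. \<forall>n. (2 ^ (n + 1) dvd f (s n) \<and> 2 dvd (s n - p0))
                 \<and> 2 ^ (n + 1) dvd (s (Suc n) - s n)"
  proof (rule dependent_nat_choice)
    show "\<exists>x. 2 ^ (0 + 1) dvd f x \<and> 2 dvd (x - p0)"
      using p0 unfolding f_def by (intro exI[of _ p0]) simp
  next
    fix x n assume x: "2 ^ (n + 1) dvd f x \<and> 2 dvd (x - p0)"
    then obtain y where y: "2 ^ (n + 2) dvd f y" "2 ^ (n + 1) dvd (y - x)"
      using dyadic_hensel_step[OF R B] unfolding f_def by blast
    have "y - p0 = (y - x) + (x - p0)" by simp
    moreover have "2 dvd (y - x)"
      using dvd_trans[OF le_imp_power_dvd[of 1 "n + 1"] y(2)] by simp
    ultimately have "2 dvd (y - p0)" using x by (simp only: dvd_add)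
    moreover have "2 ^ (Suc n + 1) dvd f y" using y(1) by simp
    ultimately show "\<exists>y. (2 ^ (Suc n + 1) dvd f y \<and> 2 dvd (y - p0)) \<and> 2 ^ (n + 1) dvd (y - x)"
      using y(2) by blast
  qed
  then obtain s where s: "\<And>n. 2 ^ (n + 1) dvd f (s n)" "\<And>n. 2 dvd (s n - p0)"
    and s_step: "\<And>n. 2 ^ (n + 1) dvd (s (Suc n) - s n)"
    by blast
  have "2 ^ n dvd (s (Suc n) - s n)" for n
    using dvd_trans[OF le_imp_power_dvd[of n "n + 1"] s_step[of n]] by simp
  then obtain x where x: "\<And>n. 2 ^ n dvd (x - s n)"
    using dyadic_complete[OF R] by blast
  have "2 ^ n dvd f x" for n
  proof -
    have "f x = f (s n) + (x - s n) * (A * (x + s n) + B)"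
      unfolding f_def by (simp add: power2_eq_square algebra_simps)
    moreover have "2 ^ n dvd f (s n)"
      using dvd_trans[OF le_imp_power_dvd[of n "n + 1"] s(1)[of n]] by simp
    ultimately show ?thesis using x[of n] by simp
  qed
  then have "f x = 0" using dyadic_dvd_all_powers_eq_0[OF R] by blast
  moreover have "x - p0 = (x - s 1) + (s 1 - p0)" by simp
  then have "2 dvd (x - p0)" using x[of 1] s(2)[of 1] by (simp only: dvd_add power_one_right)
  ultimately show ?thesis unfolding f_def by blast
qed

section \<open>Primitive representations\<close>

lemma mult_mat_vec_smult:
  "(A::'a::comm_ring_1 mat) \<in> carrier_mat nr nc \<Longrightarrow> v \<in> carrier_vec nc \<Longrightarrow>
    A *\<^sub>v (c \<cdot>\<^sub>v v) = c \<cdot>\<^sub>v (A *\<^sub>v v)"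
  by (intro eq_vecI) auto

lemma mult_mat_vec_zero:
  "(A::'a::comm_ring_1 mat) \<in> carrier_mat nr nc \<Longrightarrow> A *\<^sub>v 0\<^sub>v nc = 0\<^sub>v nr"
  by (intro eq_vecI) auto

lemma submod_range:
  assumes X: "(X::'a::comm_ring_1 mat) \<in> carrier_mat n m"
  shows "submod n {X *\<^sub>v u | u. u \<in> carrier_vec m}"
  unfolding submod_def
proof (intro conjI ballI allI)
  show "0\<^sub>v n \<in> {X *\<^sub>v u | u. u \<in> carrier_vec m}"
    using X by (intro CollectI exI[of _ "0\<^sub>v m"]) auto
next
  fix x y assume "x \<in> {X *\<^sub>v u | u. u \<in> carrier_vec m}" "y \<in> {X *\<^sub>v u | u. u \<in> carrier_vec m}"
  then obtain u w where "x = X *\<^sub>v u" "y = X *\<^sub>v w" "u \<in> carrier_vec m" "w \<in> carrier_vec m"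
    by blast
  then show "x + y \<in> {X *\<^sub>v u | u. u \<in> carrier_vec m}"
    using X by (intro CollectI exI[of _ "u + w"]) (auto simp: mult_add_distrib_mat_vec)
next
  fix c x assume "x \<in> {X *\<^sub>v u | u. u \<in> carrier_vec m}"
  then obtain u where "x = X *\<^sub>v u" "u \<in> carrier_vec m" by blast
  then show "c \<cdot>\<^sub>v x \<in> {X *\<^sub>v u | u. u \<in> carrier_vec m}"
    using X by (intro CollectI exI[of _ "c \<cdot>\<^sub>v u"]) (auto simp: mult_mat_vec_smult)
qed (use X in auto)

lemma submod_kernel:
  assumes L: "(L::'a::comm_ring_1 mat) \<in> carrier_mat m n"
  shows "submod n {x \<in> carrier_vec n. L *\<^sub>v x = 0\<^sub>v m}"
  unfolding submod_def using L
  by (auto simp: mult_add_distrib_mat_vec mult_mat_vec_smult)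

lemma submod_sum:
  fixes m :: nat
  assumes W: "submod n W" and f: "\<And>i. i < m \<Longrightarrow> f i \<in> W"
  shows "vec n (\<lambda>j. \<Sum>i<m. f i $ j) \<in> W"
  using f
proof (induction m)
  case 0
  then show ?case using W unfolding submod_def zero_vec_def by simp
next
  case (Suc m)
  have "f m \<in> carrier_vec n" using Suc.prems W unfolding submod_def by blast
  then have "vec n (\<lambda>j. \<Sum>i<Suc m. f i $ j) = vec n (\<lambda>j. \<Sum>i<m. f i $ j) + f m"
    by (intro eq_vecI) auto
  then show ?case using Suc W unfolding submod_def by simp
qed

lemma direct_summand_range_if_left_inverse:
  fixes X :: "'a::comm_ring_1 mat"
  assumes X: "X \<in> carrier_mat n m" and L: "L \<in> carrier_mat m n" and LX: "L * X = 1\<^sub>m m"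
  shows "direct_summand n {X *\<^sub>v u | u. u \<in> carrier_vec m}"
proof -
  let ?S = "{X *\<^sub>v u | u. u \<in> carrier_vec m}"
  let ?W = "{x \<in> carrier_vec n. L *\<^sub>v x = 0\<^sub>v m}"
  have LX_vec: "L *\<^sub>v (X *\<^sub>v u) = u" if "u \<in> carrier_vec m" for u
    using that X L LX by (metis assoc_mult_mat_vec one_mult_mat_vec)
  have "?S \<inter> ?W \<subseteq> {0\<^sub>v n}"
  proof
    fix x assume "x \<in> ?S \<inter> ?W"
    then obtain u where u: "x = X *\<^sub>v u" "u \<in> carrier_vec m" and "L *\<^sub>v x = 0\<^sub>v m" by blast
    then have "u = 0\<^sub>v m" using LX_vec by simp
    then show "x \<in> {0\<^sub>v n}" using u X by (auto intro!: eq_vecI)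
  qed
  moreover have "0\<^sub>v n \<in> ?S \<inter> ?W"
    using submod_range[OF X] submod_kernel[OF L] unfolding submod_def by blast
  ultimately have int: "?S \<inter> ?W = {0\<^sub>v n}" by blast
  have dec: "\<exists>s\<in>?S. \<exists>w\<in>?W. x = s + w" if x: "x \<in> carrier_vec n" for x
  proof (intro bexI)
    let ?s = "X *\<^sub>v (L *\<^sub>v x)"
    have s: "?s \<in> carrier_vec n" using X L x by simp
    show "x = ?s + (x - ?s)" using x s X by (intro eq_vecI) auto
    show "?s \<in> ?S" using L x by (intro CollectI exI[of _ "L *\<^sub>v x"]) simp
    have "L *\<^sub>v (x - ?s) = L *\<^sub>v x - L *\<^sub>v ?s"
      using L x s by (simp add: mult_minus_distrib_mat_vec)
    then show "x - ?s \<in> ?W" using L x s LX_vec[of "L *\<^sub>v x"] by simp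
  qed
  show ?thesis
    unfolding direct_summand_def
    using submod_range[OF X] submod_kernel[OF L] int dec by (intro conjI exI[of _ ?W]) auto
qed

lemma prim_representsI:
  fixes X :: "'a::comm_ring_1 mat"
  assumes "X \<in> carrier_mat n m" and "L \<in> carrier_mat m n" and "L * X = 1\<^sub>m m"
    and "transpose_mat X * G * X = A"
  shows "prim_represents n G m A"
  unfolding prim_represents_def represents_by_def
  using assms direct_summand_range_if_left_inverse by blast

lemma transpose_mult_mult_mat_index:
  fixes G :: "'a::comm_ring_1 mat"
  assumes X: "X \<in> carrier_mat n m" and G: "G \<in> carrier_mat n n" and ij: "i < m" "j < m"
  shows "(transpose_mat X * G * X) $$ (i, j) = col X i \<bullet> (G *\<^sub>v col X j)"
proof -
  have "(transpose_mat X * G * X) $$ (i, j) = (transpose_mat X * (G * X)) $$ (i, j)"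
    using X G by (simp add: assoc_mult_mat[of _ m n _ n _ m])
  also have "\<dots> = col X i \<bullet> col (G * X) j"
    using X G ij by simp
  also have "col (G * X) j = G *\<^sub>v col X j"
    using X G ij by (simp add: mult_mat_vec_def)
  finally show ?thesis .
qed

text \<open>Writing \<open>e\<^sub>i = c\<^sub>i v + w\<^sub>i\<close> with \<open>w\<^sub>i\<close> in the complement \<open>W\<close>, we get
  \<open>(1 - \<Sum>\<^sub>i v\<^sub>i c\<^sub>i) v = \<Sum>\<^sub>i v\<^sub>i w\<^sub>i \<in> W \<inter> R v = 0\<close>.\<close>
lemma primitive_vec_dual:
  fixes v :: "'a::idom vec"
  assumes "primitive_vec k v"
  shows "\<exists>p\<in>carrier_vec k. p \<bullet> v = 1"
proof -
  let ?S = "{c \<cdot>\<^sub>v v | c. True}"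
  have v: "v \<in> carrier_vec k" "v \<noteq> 0\<^sub>v k" using assms unfolding primitive_vec_def by auto
  obtain W where W: "submod k W" "?S \<inter> W = {0\<^sub>v k}" "\<forall>x\<in>carrier_vec k. \<exists>s\<in>?S. \<exists>w\<in>W. x = s + w"
    using assms unfolding primitive_vec_def direct_summand_def by blast
  have W_carrier: "W \<subseteq> carrier_vec k" and W_smult: "\<And>c x. x \<in> W \<Longrightarrow> c \<cdot>\<^sub>v x \<in> W"
    using W(1) unfolding submod_def by blast+
  have "\<exists>c. unit_vec k i - c \<cdot>\<^sub>v v \<in> W" if "i < k" for i
  proof -
    obtain s w where "s \<in> ?S" "w \<in> W" "unit_vec k i = s + w"
      using W(3) unit_vec_carrier[of k i] by blast
    moreover from \<open>s \<in> ?S\<close> obtain c where "s = c \<cdot>\<^sub>v v" by blast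
    moreover have "w \<in> carrier_vec k" using \<open>w \<in> W\<close> W_carrier by blast
    ultimately have "unit_vec k i - c \<cdot>\<^sub>v v = w" using v by (intro eq_vecI) auto
    with \<open>w \<in> W\<close> show ?thesis by blast
  qed
  then obtain c where c: "\<And>i. i < k \<Longrightarrow> unit_vec k i - c i \<cdot>\<^sub>v v \<in> W" by metis
  define \<sigma> where "\<sigma> = (\<Sum>i<k. v $ i * c i)"
  have "vec k (\<lambda>j. \<Sum>i<k. (v $ i \<cdot>\<^sub>v (unit_vec k i - c i \<cdot>\<^sub>v v)) $ j) \<in> W"
    by (rule submod_sum[OF W(1)]) (rule W_smult[OF c])
  moreover have "vec k (\<lambda>j. \<Sum>i<k. (v $ i \<cdot>\<^sub>v (unit_vec k i - c i \<cdot>\<^sub>v v)) $ j) = (1 - \<sigma>) \<cdot>\<^sub>v v"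
  proof (intro eq_vecI)
    fix j assume "j < dim_vec ((1 - \<sigma>) \<cdot>\<^sub>v v)"
    then have j: "j < k" using v by simp
    have "(\<Sum>i<k. (v $ i \<cdot>\<^sub>v (unit_vec k i - c i \<cdot>\<^sub>v v)) $ j)
        = (\<Sum>i<k. (if i = j then v $ i else 0) - v $ i * c i * v $ j)"
      using j v by (intro sum.cong) (auto simp: right_diff_distrib mult.assoc)
    also have "\<dots> = v $ j - \<sigma> * v $ j"
      using j by (simp add: sum_subtractf sum_distrib_right \<sigma>_def)
    also have "\<dots> = (1 - \<sigma>) * v $ j"
      by (simp add: left_diff_distrib)
    finally show "vec k (\<lambda>j. \<Sum>i<k. (v $ i \<cdot>\<^sub>v (unit_vec k i - c i \<cdot>\<^sub>v v)) $ j) $ j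
        = ((1 - \<sigma>) \<cdot>\<^sub>v v) $ j"
      using j v by simp
  qed (use v in simp)
  ultimately have "(1 - \<sigma>) \<cdot>\<^sub>v v \<in> W" by simp
  then have "(1 - \<sigma>) \<cdot>\<^sub>v v \<in> ?S \<inter> W" by blast
  then have zero: "(1 - \<sigma>) \<cdot>\<^sub>v v = 0\<^sub>v k" by (simp only: W(2) singleton_iff)
  obtain j where j: "j < k" "v $ j \<noteq> 0"
    using v by (metis carrier_vecD eq_vecI index_zero_vec(1,2))
  have "(1 - \<sigma>) * v $ j = 0"
    using arg_cong[OF zero, of "\<lambda>x. x $ j"] j v by simp
  then have "\<sigma> = 1" using j(2) by simp
  moreover have "vec k c \<bullet> v = \<sigma>"
    using v unfolding scalar_prod_def \<sigma>_def
    by (simp add: lessThan_atLeast0 mult.commute)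
  ultimately show ?thesis by (intro bexI[of _ "vec k c"]) auto
qed

lemma prim_represents_binaryI:
  fixes G :: "'a::comm_ring_1 mat"
  assumes G: "G \<in> carrier_mat n n" and A: "A \<in> carrier_mat 2 2"
    and xy: "x \<in> carrier_vec n" "y \<in> carrier_vec n"
    and pq: "p \<in> carrier_vec n" "q \<in> carrier_vec n"
    and dual: "p \<bullet> x = 1" "p \<bullet> y = 0" "q \<bullet> x = 0" "q \<bullet> y = 1"
    and gram: "x \<bullet> (G *\<^sub>v x) = A $$ (0, 0)" "x \<bullet> (G *\<^sub>v y) = A $$ (0, 1)"
      "y \<bullet> (G *\<^sub>v x) = A $$ (1, 0)" "y \<bullet> (G *\<^sub>v y) = A $$ (1, 1)"
  shows "prim_represents n G 2 A"
proof (rule prim_representsI)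
  let ?X = "mat_of_cols n [x, y]"
  let ?L = "mat_of_rows n [p, q]"
  show X: "?X \<in> carrier_mat n 2" and L: "?L \<in> carrier_mat 2 n"
    using mat_of_cols_carrier(1)[of n "[x, y]"] mat_of_rows_carrier(1)[of n "[p, q]"]
    by (simp_all add: numeral_2_eq_2)
  have col_X: "col ?X j = [x, y] ! j" if "j < 2" for j
    using that xy by (intro col_mat_of_cols) (auto simp: less_2_cases_iff)
  have row_L: "row ?L i = [p, q] ! i" if "i < 2" for i
    using that pq by (intro mat_of_rows_row) (auto simp: less_2_cases_iff)
  show "?L * ?X = 1\<^sub>m 2"
  proof (rule eq_matI)
    fix i j assume "i < dim_row (1\<^sub>m 2 :: 'a mat)" "j < dim_col (1\<^sub>m 2 :: 'a mat)"
    then have ij: "i < 2" "j < 2" by auto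
    then have "(?L * ?X) $$ (i, j) = [p, q] ! i \<bullet> [x, y] ! j"
      using X L col_X row_L by simp
    then show "(?L * ?X) $$ (i, j) = 1\<^sub>m 2 $$ (i, j)"
      using ij dual by (auto simp: less_2_cases_iff)
  qed (use X L in auto)
  show "transpose_mat ?X * G * ?X = A"
  proof (rule eq_matI)
    fix i j assume "i < dim_row A" "j < dim_col A"
    then have ij: "i < 2" "j < 2" using A by auto
    then have "(transpose_mat ?X * G * ?X) $$ (i, j) = [x, y] ! i \<bullet> (G *\<^sub>v [x, y] ! j)"
      using transpose_mult_mult_mat_index[OF X G] col_X by simp
    then show "(transpose_mat ?X * G * ?X) $$ (i, j) = A $$ (i, j)"
      using ij gram by (auto simp: less_2_cases_iff)
  qed (use X G A in auto)
qed

section \<open>Hyperbolic planes\<close>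

lemma carrier_hypH: "hypH c \<in> carrier_mat 2 2"
  unfolding hypH_def by simp

lemma index_hypH: "i < 2 \<Longrightarrow> j < 2 \<Longrightarrow> hypH c $$ (i, j) = (if i = j then 0 else c)"
  unfolding hypH_def by simp

lemma carrier_orth_sum_hypH:
  "J \<in> carrier_mat k k \<Longrightarrow> orth_sum (hypH c) J \<in> carrier_mat (Suc (Suc k)) (Suc (Suc k))"
  unfolding orth_sum_def using four_block_carrier_mat[OF carrier_hypH] by simp

lemma orth_sum_hypH_mult_vCons:
  fixes J :: "'a::comm_ring_1 mat"
  assumes J: "J \<in> carrier_mat k k" and w: "w \<in> carrier_vec k"
  shows "orth_sum (hypH c) J *\<^sub>v vCons a (vCons b w) = vCons (c * b) (vCons (c * a) (J *\<^sub>v w))"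
proof -
  let ?u = "vCons a (vCons b vNil)"
  have u: "?u \<in> carrier_vec 2" by (simp add: numeral_2_eq_2)
  have H: "hypH c *\<^sub>v ?u = vCons (c * b) (vCons (c * a) vNil)"
  proof (rule eq_vecI)
    fix i assume "i < dim_vec (vCons (c * b) (vCons (c * a) vNil))"
    then have "i = 0 \<or> i = 1" by auto
    then show "(hypH c *\<^sub>v ?u) $ i = vCons (c * b) (vCons (c * a) vNil) $ i"
      by (auto simp: hypH_def mult_mat_vec_def scalar_prod_def numeral_2_eq_2)
  qed (simp add: hypH_def)
  have "orth_sum (hypH c) J = four_block_mat (hypH c) (0\<^sub>m 2 k) (0\<^sub>m k 2) J"
    unfolding orth_sum_def using carrier_matD[OF J] carrier_matD[OF carrier_hypH[of c]] by simp
  moreover have "vCons a (vCons b w) = ?u @\<^sub>v w" by simp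
  ultimately have "orth_sum (hypH c) J *\<^sub>v vCons a (vCons b w) = (hypH c *\<^sub>v ?u) @\<^sub>v (J *\<^sub>v w)"
    using mult_mat_vec_split[OF carrier_hypH J u w] by (simp only:)
  then show ?thesis by (simp add: H)
qed

lemma vec_eq_vCons_vCons:
  assumes "x \<in> carrier_vec (Suc (Suc k))"
  shows "x = vCons (x $ 0) (vCons (x $ 1) (vec k (\<lambda>i. x $ (i + 2))))"
proof (rule eq_vecI)
  fix i assume i: "i < dim_vec (vCons (x $ 0) (vCons (x $ 1) (vec k (\<lambda>i. x $ (i + 2)))))"
  show "x $ i = vCons (x $ 0) (vCons (x $ 1) (vec k (\<lambda>i. x $ (i + 2)))) $ i"
  proof (cases i)
    case (Suc j)
    with i show ?thesis by (cases j) simp_all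
  qed simp
qed (use assms in simp)

lemma carrier_hypH_pow: "hypH_pow n \<in> carrier_mat (2 * n) (2 * n)"
  by (induction n) (auto dest: carrier_orth_sum_hypH)

lemma scalar_prod_hypH_pow:
  fixes x y :: "'a::comm_ring_1 vec"
  assumes "x \<in> carrier_vec (2 * n)" "y \<in> carrier_vec (2 * n)"
  shows "x \<bullet> (hypH_pow n *\<^sub>v y) = (\<Sum>s<n. x $ (2 * s) * y $ (2 * s + 1) + x $ (2 * s + 1) * y $ (2 * s))"
  using assms
proof (induction n arbitrary: x y)
  case 0
  then show ?case by (simp add: scalar_prod_def)
next
  case (Suc n)
  obtain a b x' where x: "x = vCons a (vCons b x')" and x': "x' \<in> carrier_vec (2 * n)"
    by (rule that[OF vec_eq_vCons_vCons[of x "2 * n"]]) (use Suc.prems in simp_all)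
  obtain c d y' where y: "y = vCons c (vCons d y')" and y': "y' \<in> carrier_vec (2 * n)"
    by (rule that[OF vec_eq_vCons_vCons[of y "2 * n"]]) (use Suc.prems in simp_all)
  have "x \<bullet> (hypH_pow (Suc n) *\<^sub>v y) = a * d + b * c + x' \<bullet> (hypH_pow n *\<^sub>v y')"
    unfolding x y using orth_sum_hypH_mult_vCons[OF carrier_hypH_pow y'] by simp
  also have "\<dots> = (\<Sum>s<Suc n. x $ (2 * s) * y $ (2 * s + 1) + x $ (2 * s + 1) * y $ (2 * s))"
    unfolding Suc.IH[OF x' y'] sum.lessThan_Suc_shift x y by simp
  finally show ?case .
qed

section \<open>Binary lattices represented by \<open>H \<perp> J\<close>\<close>

lemma Qf_smult:
  "J \<in> carrier_mat k k \<Longrightarrow> w \<in> carrier_vec k \<Longrightarrow> Qf J (c \<cdot>\<^sub>v w) = c * c * Qf J w"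
  unfolding Qf_def by (simp add: mult_mat_vec_smult)

lemma dyadic_vec_eq_two_power_smult:
  fixes v :: "'a::idom vec"
  assumes R: "dyadic_local_int_ring TYPE('a)" and v: "v \<in> carrier_vec k" "v \<noteq> 0\<^sub>v k"
  shows "\<exists>m w j. w \<in> carrier_vec k \<and> v = 2 ^ m \<cdot>\<^sub>v w \<and> j < k \<and> w $ j dvd 1"
proof -
  define E where "E = {e. \<exists>i<k. \<exists>u. u dvd 1 \<and> v $ i = u * 2 ^ e}"
  obtain i where "i < k" "v $ i \<noteq> 0"
    using v by (metis carrier_vecD eq_vecI index_zero_vec(1,2))
  then have "\<exists>e. e \<in> E" using dyadic_unit_times_two_power[OF R] unfolding E_def by blast
  define m where "m = (LEAST e. e \<in> E)"
  have "m \<in> E" unfolding m_def using \<open>\<exists>e. e \<in> E\<close> by (rule LeastI_ex)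
  then obtain j u where j: "j < k" "u dvd 1" "v $ j = u * 2 ^ m" unfolding E_def by blast
  have "\<exists>c. v $ i = 2 ^ m * c" if "i < k" for i
  proof (cases "v $ i = 0")
    case False
    then obtain u e where ue: "u dvd 1" "v $ i = u * 2 ^ e"
      using dyadic_unit_times_two_power[OF R] by blast
    then have "e \<in> E" using that unfolding E_def by blast
    then have "m \<le> e" unfolding m_def by (rule Least_le)
    then have "v $ i = 2 ^ m * (u * 2 ^ (e - m))"
      using ue by (simp add: power_add[symmetric] ac_simps)
    then show ?thesis by blast
  qed simp
  then obtain w0 where w0: "\<And>i. i < k \<Longrightarrow> v $ i = 2 ^ m * w0 i" by metis
  define w where "w = vec k w0"
  have "v = 2 ^ m \<cdot>\<^sub>v w" using v w0 unfolding w_def by (intro eq_vecI) auto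
  moreover have "w $ j = u"
    using w0[OF j(1)] j dyadic_two_nonzero[OF R] unfolding w_def by (simp add: mult.commute)
  moreover have "w \<in> carrier_vec k" unfolding w_def by simp
  ultimately show ?thesis using j by blast
qed

lemma dyadic_isotropic_imp_dual_isotropic:
  fixes J :: "'a::idom mat"
  assumes R: "dyadic_local_int_ring TYPE('a)" and J: "J \<in> carrier_mat k k"
    and "isotropic k J"
  shows "\<exists>w\<in>carrier_vec k. \<exists>p\<in>carrier_vec k. p \<bullet> w = 1 \<and> Qf J w = 0"
proof -
  obtain v where v: "v \<in> carrier_vec k" "v \<noteq> 0\<^sub>v k" "Qf J v = 0"
    using assms(3) unfolding isotropic_def by blast
  obtain m w j where w: "w \<in> carrier_vec k" "v = 2 ^ m \<cdot>\<^sub>v w" "j < k" "w $ j dvd 1"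
    using dyadic_vec_eq_two_power_smult[OF R v(1,2)] by blast
  have "2 ^ m * 2 ^ m * Qf J w = 0" using v(3) w Qf_smult[OF J w(1)] by simp
  then have "Qf J w = 0" using dyadic_two_nonzero[OF R] by simp
  moreover obtain u where "1 = w $ j * u" using w(4) by blast
  then have "(u \<cdot>\<^sub>v unit_vec k j) \<bullet> w = 1" using w by (simp add: mult.commute)
  ultimately show ?thesis using w(1) by (intro bexI[of _ w] bexI[of _ "u \<cdot>\<^sub>v unit_vec k j"]) auto
qed

lemma orth_sum_hypH_prim_represents_hypH:
  fixes J :: "'a::comm_ring_1 mat"
  assumes J: "J \<in> carrier_mat k k" and v: "v \<in> carrier_vec k" and p: "p \<in> carrier_vec k"
    and pv: "p \<bullet> v = 1" and Q: "Qf J v = 2 * \<alpha> * c"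
  shows "prim_represents (2 + k) (orth_sum (hypH 1) J) 2 (hypH \<alpha>)"
proof (rule prim_represents_binaryI[where x = "vCons 1 (vCons 0 (0\<^sub>v k))"
      and y = "vCons (- c) (vCons \<alpha> v)" and p = "vCons 1 (vCons 0 (c \<cdot>\<^sub>v p))"
      and q = "vCons 0 (vCons 0 p)"])
  have "v \<bullet> (J *\<^sub>v v) = 2 * \<alpha> * c" using Q unfolding Qf_def .
  then show "vCons (- c) (vCons \<alpha> v) \<bullet> (orth_sum (hypH 1) J *\<^sub>v vCons (- c) (vCons \<alpha> v)) = hypH \<alpha> $$ (1, 1)"
    using J v by (simp add: orth_sum_hypH_mult_vCons index_hypH algebra_simps)
qed (use J v p pv in \<open>simp_all add: orth_sum_hypH_mult_vCons carrier_orth_sum_hypH carrier_hypH index_hypH mult_mat_vec_zero\<close>)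

lemma orth_sum_hypH_prim_represents_anisoA:
  fixes J :: "'a::comm_ring_1 mat"
  assumes J: "J \<in> carrier_mat k k" and v: "v \<in> carrier_vec k" and p: "p \<in> carrier_vec k"
    and pv: "p \<bullet> v = 1" and Q: "Qf J v = 2 * \<alpha> * \<epsilon>"
    and q: "q = 1 - (1 - \<epsilon>) * r - 2 * \<epsilon> * t" and \<rho>: "r * q + \<epsilon> * t ^ 2 = \<rho>"
    and D: "D * (t - r) = 1"
  shows "prim_represents (2 + k) (orth_sum (hypH 1) J) 2 (anisoA \<rho> \<alpha>)"
proof (rule prim_represents_binaryI[where x = "vCons 1 (vCons (\<alpha> * (1 - \<epsilon>)) v)"
      and y = "vCons r (vCons (\<alpha> * q) (t \<cdot>\<^sub>v v))" and p = "vCons (D * t) (vCons 0 ((- (D * r)) \<cdot>\<^sub>v p))"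
      and q = "vCons (- D) (vCons 0 (D \<cdot>\<^sub>v p))"])
  have Jv: "v \<bullet> (J *\<^sub>v v) = 2 * \<alpha> * \<epsilon>" using Q unfolding Qf_def .
  have G: "orth_sum (hypH 1) J *\<^sub>v vCons a (vCons b (s \<cdot>\<^sub>v v)) = vCons b (vCons a (s \<cdot>\<^sub>v (J *\<^sub>v v)))"
    for a b s
    using J v by (simp add: orth_sum_hypH_mult_vCons mult_mat_vec_smult)
  have G1: "orth_sum (hypH 1) J *\<^sub>v vCons a (vCons b v) = vCons b (vCons a (J *\<^sub>v v))" for a b
    using J v by (simp add: orth_sum_hypH_mult_vCons)
  show "vCons 1 (vCons (\<alpha> * (1 - \<epsilon>)) v) \<bullet> (orth_sum (hypH 1) J *\<^sub>v vCons 1 (vCons (\<alpha> * (1 - \<epsilon>)) v))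
      = anisoA \<rho> \<alpha> $$ (0, 0)"
    using Jv by (simp add: G1 anisoA_def algebra_simps)
  show "vCons 1 (vCons (\<alpha> * (1 - \<epsilon>)) v) \<bullet> (orth_sum (hypH 1) J *\<^sub>v vCons r (vCons (\<alpha> * q) (t \<cdot>\<^sub>v v)))
      = anisoA \<rho> \<alpha> $$ (0, 1)"
    using Jv J v by (simp add: G anisoA_def q algebra_simps)
  show "vCons r (vCons (\<alpha> * q) (t \<cdot>\<^sub>v v)) \<bullet> (orth_sum (hypH 1) J *\<^sub>v vCons 1 (vCons (\<alpha> * (1 - \<epsilon>)) v))
      = anisoA \<rho> \<alpha> $$ (1, 0)"
    using Jv J v by (simp add: G1 anisoA_def q algebra_simps)
  show "vCons r (vCons (\<alpha> * q) (t \<cdot>\<^sub>v v)) \<bullet> (orth_sum (hypH 1) J *\<^sub>v vCons r (vCons (\<alpha> * q) (t \<cdot>\<^sub>v v)))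
      = anisoA \<rho> \<alpha> $$ (1, 1)"
    using Jv J v by (simp add: G anisoA_def \<rho>[symmetric] power2_eq_square algebra_simps)
  have "r * (D * (t - r)) = r" using D by simp
  then show "vCons (D * t) (vCons 0 ((- (D * r)) \<cdot>\<^sub>v p)) \<bullet> vCons r (vCons (\<alpha> * q) (t \<cdot>\<^sub>v v)) = 0"
    using p v pv by (simp add: algebra_simps)
qed (use J v p pv D in \<open>simp_all add: carrier_orth_sum_hypH anisoA_def algebra_simps\<close>)

lemma dyadic_exists_anisoA_parameters:
  fixes \<rho> \<epsilon> :: "'a::idom"
  assumes R: "dyadic_local_int_ring TYPE('a)" and \<rho>: "\<rho> dvd 1" and \<epsilon>: "\<epsilon> dvd 1"
  shows "\<exists>r t. r * (1 - (1 - \<epsilon>) * r - 2 * \<epsilon> * t) + \<epsilon> * t ^ 2 = \<rho> \<and> (t - r) dvd 1"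
proof -
  obtain \<epsilon>' where \<epsilon>': "1 = \<epsilon> * \<epsilon>'" using \<epsilon> by (rule dvdE)
  then have "\<epsilon>' dvd 1" by (metis dvd_triv_right)
  obtain t where t: "2 dvd (\<rho> * \<epsilon>' - t ^ 2)" using dyadic_square_mod_two[OF R] by blast
  have "\<rho> - \<epsilon> * t ^ 2 = \<epsilon> * (\<rho> * \<epsilon>' - t ^ 2)"
    by (simp add: right_diff_distrib mult.left_commute flip: \<epsilon>')
  then have C: "2 dvd (\<rho> - \<epsilon> * t ^ 2)" using t by simp
  have "t dvd 1"
  proof -
    obtain x where x: "\<rho> * \<epsilon>' - t ^ 2 = 2 * x" using t by (rule dvdE)
    have "(\<rho> * \<epsilon>' + 2 * (- x)) dvd 1"
      using dyadic_unit_add_two_mult[OF R unit_prod[OF \<rho> \<open>\<epsilon>' dvd 1\<close>]] .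
    moreover have "\<rho> * \<epsilon>' + 2 * (- x) = t * t" by (simp add: power2_eq_square flip: x)
    ultimately show ?thesis using dvd_mult_left[of t t 1] by simp
  qed
  have "(- 1 + 2 * (\<epsilon> * t)) dvd 1" by (rule dyadic_unit_add_two_mult[OF R]) simp
  then have B: "(2 * \<epsilon> * t - 1) dvd 1" by (simp add: mult.assoc)
  have "\<exists>r. (1 - \<epsilon>) * r ^ 2 + (2 * \<epsilon> * t - 1) * r + (\<rho> - \<epsilon> * t ^ 2) = 0 \<and> 2 dvd (r - 0)"
    by (rule dyadic_hensel_quadratic[OF R B]) (use C in simp)
  then obtain r where r: "(1 - \<epsilon>) * r ^ 2 + (2 * \<epsilon> * t - 1) * r + (\<rho> - \<epsilon> * t ^ 2) = 0"
    and "2 dvd r" by auto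
  have "\<rho> - (r * (1 - (1 - \<epsilon>) * r - 2 * \<epsilon> * t) + \<epsilon> * t ^ 2)
      = (1 - \<epsilon>) * r ^ 2 + (2 * \<epsilon> * t - 1) * r + (\<rho> - \<epsilon> * t ^ 2)"
    by (simp add: algebra_simps power2_eq_square)
  then have "r * (1 - (1 - \<epsilon>) * r - 2 * \<epsilon> * t) + \<epsilon> * t ^ 2 = \<rho>" using r by simp
  moreover obtain y where "r = 2 * y" using \<open>2 dvd r\<close> by (rule dvdE)
  then have "(t - r) dvd 1" using dyadic_unit_add_two_mult[OF R \<open>t dvd 1\<close>, of "- y"] by simp
  ultimately show ?thesis by blast
qed

lemma dyadic_orth_sum_hypH_prim_represents:
  fixes J :: "'a::idom mat"
  assumes R: "dyadic_local_int_ring TYPE('a)" and \<rho>: "\<rho> dvd 1" and \<epsilon>: "\<epsilon> dvd 1"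
    and J: "J \<in> carrier_mat k k" and v: "v \<in> carrier_vec k" and p: "p \<in> carrier_vec k"
    and pv: "p \<bullet> v = 1" and Q: "Qf J v = 2 * \<alpha> * \<epsilon>"
  shows "prim_represents (2 + k) (orth_sum (hypH 1) J) 2 (hypH \<alpha>)
    \<and> prim_represents (2 + k) (orth_sum (hypH 1) J) 2 (anisoA \<rho> \<alpha>)"
proof
  show "prim_represents (2 + k) (orth_sum (hypH 1) J) 2 (hypH \<alpha>)"
    by (rule orth_sum_hypH_prim_represents_hypH[OF J v p pv Q])
  obtain r t where rt: "r * (1 - (1 - \<epsilon>) * r - 2 * \<epsilon> * t) + \<epsilon> * t ^ 2 = \<rho>" "(t - r) dvd 1"
    using dyadic_exists_anisoA_parameters[OF R \<rho> \<epsilon>] by blast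
  then obtain D where "D * (t - r) = 1" by (metis dvdE mult.commute)
  then show "prim_represents (2 + k) (orth_sum (hypH 1) J) 2 (anisoA \<rho> \<alpha>)"
    by (rule orth_sum_hypH_prim_represents_anisoA[OF J v p pv Q refl rt(1)])
qed

lemma dyadic_hypH_pow_two_prim_represents:
  fixes \<rho> \<alpha> :: "'a::idom"
  assumes R: "dyadic_local_int_ring TYPE('a)" and \<rho>: "\<rho> dvd 1"
  shows "prim_represents 4 (hypH_pow 2) 2 (hypH \<alpha>) \<and> prim_represents 4 (hypH_pow 2) 2 (anisoA \<rho> \<alpha>)"
proof -
  let ?v = "vCons 1 (vCons \<alpha> vNil)" and ?p = "vCons 1 (vCons 0 vNil)"
  have v: "?v \<in> carrier_vec (2 * 1)" and p: "?p \<in> carrier_vec (2 * 1)" by (simp_all add: numeral_2_eq_2)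
  have "Qf (hypH_pow 1) ?v = 2 * \<alpha> * 1"
    unfolding Qf_def scalar_prod_hypH_pow[OF v v] by simp
  from dyadic_orth_sum_hypH_prim_represents[OF R \<rho> one_dvd carrier_hypH_pow v p _ this]
  have "prim_represents (2 + 2 * 1) (hypH_pow 2) 2 (hypH \<alpha>)
      \<and> prim_represents (2 + 2 * 1) (hypH_pow 2) 2 (anisoA \<rho> \<alpha>)"
    by (simp add: numeral_2_eq_2)
  then show ?thesis by simp
qed

section \<open>Even lattices\<close>

text \<open>An even symmetric \<open>L\<close> splits as \<open>U + U\<^sup>T\<close> with \<open>U\<close> upper triangular; interleaving
  the rows of the identity with those of \<open>U\<close> gives a primitive representation.\<close>
lemma even_lattice_prim_represented_by_hypH_pow:
  fixes L :: "'a::comm_ring_1 mat"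
  assumes "even_lattice n L"
  shows "prim_represents (2 * n) (hypH_pow n) n L"
proof -
  have L: "L \<in> carrier_mat n n" and sym: "transpose_mat L = L"
    using assms unfolding even_lattice_def lattice_def by auto
  have L_sym: "L $$ (i, j) = L $$ (j, i)" if "i < n" "j < n" for i j
    using sym that L by (metis carrier_matD(1,2) index_transpose_mat(1))
  have "\<exists>h. L $$ (i, i) = 2 * h" if i: "i < n" for i
  proof -
    have "Qf L (unit_vec n i) = L $$ (i, i)" unfolding Qf_def using L i by simp
    moreover have "2 dvd Qf L (unit_vec n i)" using assms unfolding even_lattice_def by simp
    ultimately show ?thesis by auto
  qed
  then obtain h where h: "\<And>i. i < n \<Longrightarrow> L $$ (i, i) = 2 * h i" by metis
  define U where "U i j = (if i < j then L $$ (i, j) else if i = j then h i else 0)" for i j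
  define X :: "'a mat" where
    "X = mat (2 * n) n (\<lambda>(r, j). if even r then (if r div 2 = j then 1 else 0) else U (r div 2) j)"
  define M :: "'a mat" where "M = mat n (2 * n) (\<lambda>(i, r). if r = 2 * i then 1 else 0)"
  have X: "X \<in> carrier_mat (2 * n) n" and M: "M \<in> carrier_mat n (2 * n)"
    unfolding X_def M_def by simp_all
  show ?thesis
  proof (rule prim_representsI[OF X M])
    show "M * X = 1\<^sub>m n"
    proof (rule eq_matI)
      fix i j assume "i < dim_row (1\<^sub>m n :: 'a mat)" "j < dim_col (1\<^sub>m n :: 'a mat)"
      then have ij: "i < n" "j < n" by auto
      have "(M * X) $$ (i, j) = (\<Sum>r<2 * n. (if r = 2 * i then 1 else 0) * X $$ (r, j))"
        using M X ij by (simp add: scalar_prod_def M_def lessThan_atLeast0)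
      also have "\<dots> = (\<Sum>r<2 * n. if r = 2 * i then X $$ (r, j) else 0)"
        by (intro sum.cong) auto
      also have "\<dots> = X $$ (2 * i, j)" using ij by simp
      finally show "(M * X) $$ (i, j) = 1\<^sub>m n $$ (i, j)" using ij unfolding X_def by auto
    qed (use M X in auto)
    show "transpose_mat X * hypH_pow n * X = L"
    proof (rule eq_matI)
      fix j l assume "j < dim_row L" "l < dim_col L"
      then have jl: "j < n" "l < n" using L by auto
      have cols: "col X j \<in> carrier_vec (2 * n)" "col X l \<in> carrier_vec (2 * n)"
        using X by (simp_all add: carrier_vecI)
      have "(transpose_mat X * hypH_pow n * X) $$ (j, l) = col X j \<bullet> (hypH_pow n *\<^sub>v col X l)"
        by (rule transpose_mult_mult_mat_index[OF X carrier_hypH_pow jl])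
      also have "\<dots> = (\<Sum>s<n. (if s = j then U s l else 0) + (if s = l then U s j else 0))"
        unfolding scalar_prod_hypH_pow[OF cols] using jl by (intro sum.cong) (auto simp: X_def)
      also have "\<dots> = L $$ (j, l)"
        using jl h L_sym by (auto simp: sum.distrib U_def)
      finally show "(transpose_mat X * hypH_pow n * X) $$ (j, l) = L $$ (j, l)" .
    qed (use X L in auto)
  qed
qed

theorem lemma4p1:
  fixes \<rho> :: "'a::idom"
  assumes R: "dyadic_local_int_ring TYPE('a)"
    and rho_unit: "\<rho> dvd 1"
    and Delta: "(1 - 4 * \<rho>) dvd 1 \<and> \<not> (\<exists>y. 1 - 4 * \<rho> = y ^ 2)"
  shows
    "(\<forall>k (J::'a mat) a::nat. lattice k J \<and> isotropic k J \<longrightarrow>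
        prim_represents (2 + k) (orth_sum (hypH 1) J) 2 (hypH (2 ^ a)))
   \<and> (\<forall>k (J::'a mat) (a::nat) \<epsilon>. lattice k J \<and> \<epsilon> dvd 1 \<and>
        prim_represents_elem k J (2 ^ (a + 1) * \<epsilon>) \<longrightarrow>
        prim_represents (2 + k) (orth_sum (hypH 1) J) 2 (hypH (2 ^ a)) \<and>
        prim_represents (2 + k) (orth_sum (hypH 1) J) 2 (anisoA \<rho> (2 ^ a)))
   \<and> (\<forall>a::nat. prim_represents 4 (hypH_pow 2 :: 'a mat) 2 (hypH (2 ^ a)) \<and>
        prim_represents 4 (hypH_pow 2 :: 'a mat) 2 (anisoA \<rho> (2 ^ a)))
   \<and> (\<forall>n (L::'a mat). n \<ge> 1 \<and> even_lattice n L \<longrightarrow>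
        prim_represents (2 * n) (hypH_pow n) n L)"
proof (intro conjI allI impI)
  fix k a and J :: "'a mat"
  assume "lattice k J \<and> isotropic k J"
  then have J: "J \<in> carrier_mat k k" and "isotropic k J" unfolding lattice_def by auto
  then obtain w p where "w \<in> carrier_vec k" "p \<in> carrier_vec k" "p \<bullet> w = 1" "Qf J w = 0"
    using dyadic_isotropic_imp_dual_isotropic[OF R] by blast
  then show "prim_represents (2 + k) (orth_sum (hypH 1) J) 2 (hypH (2 ^ a))"
    by (intro orth_sum_hypH_prim_represents_hypH[OF J, where c = 0]) simp_all
next
  fix k a \<epsilon> and J :: "'a mat"
  assume "lattice k J \<and> \<epsilon> dvd 1 \<and> prim_represents_elem k J (2 ^ (a + 1) * \<epsilon>)"
  then obtain v where J: "J \<in> carrier_mat k k" and \<epsilon>: "\<epsilon> dvd 1" and v: "primitive_vec k v"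
    and Q: "Qf J v = 2 * 2 ^ a * \<epsilon>"
    unfolding lattice_def prim_represents_elem_def by auto
  obtain p where p: "p \<in> carrier_vec k" "p \<bullet> v = 1" using primitive_vec_dual[OF v] by blast
  have "v \<in> carrier_vec k" using v unfolding primitive_vec_def by blast
  from dyadic_orth_sum_hypH_prim_represents[OF R rho_unit \<epsilon> J this p Q] show "prim_represents (2 + k) (orth_sum (hypH 1) J) 2 (hypH (2 ^ a))"
    and "prim_represents (2 + k) (orth_sum (hypH 1) J) 2 (anisoA \<rho> (2 ^ a))"
    by blast+
next
  fix a :: nat
  show "prim_represents 4 (hypH_pow 2 :: 'a mat) 2 (hypH (2 ^ a))"
    and "prim_represents 4 (hypH_pow 2 :: 'a mat) 2 (anisoA \<rho> (2 ^ a))"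
    using dyadic_hypH_pow_two_prim_represents[OF R rho_unit] by blast+
next
  fix n and L :: "'a mat"
  assume "1 \<le> n \<and> even_lattice n L"
  then show "prim_represents (2 * n) (hypH_pow n) n L"
    using even_lattice_prim_represented_by_hypH_pow by blast
qed

end
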